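(* Let $\rho:\mathbb{R}\to\mathbb{R}$ be differentiable, applied element-wise to vectors. Let $D=\{u\in\mathbb{R}:\rho'(u)\neq 0\}$ and define $\varsigma:D\to\mathbb{R}$, $\varsigma(u)=u/\rho'(u)$ (applied element-wise to vectors, i.e. $\varsigma(\vec{s})=\vec{s}\oslash\rho'(\vec{s})$ with $\oslash$ the Hadamard division), and assume $\varsigma$ is a bijection from $D$ onto $\mathbb{R}$; set $\rho_\varsigma:=\rho\circ\varsigma^{-1}:\mathbb{R}\to\mathbb{R}$. Let $\vec{W}\in\mathbb{R}^{N\times N}$, $\vec{b}\in\mathbb{R}^N$, $\vec{U}\in\mathbb{R}^{N\times d}$ be such that the CHN defined by these data is well-behaved, and let $\vec{x}\in\mathbb{R}^d$ be an input all of whose entries lie in $D$. Let $\vec{s}^*\in\mathbb{R}^N$ be the equilibrium of the CHN, i.e. the unique solution of $\vec{s}^*=\rho'(\vec{s}^* )\odot(\vec{W}\rho(\vec{s}^* )+\vec{b}+\vec{U}\rho(\vec{x}))$. Then all entries of $\vec{s}^*$ lie in $D$, and $\vec{s}^*_\varsigma:=\varsigma(\vec{s}^* )$ satisfies the HAM equilibrium equation with non-linearity $\rho_\varsigma$ and preprocessed input $\varsigma(\vec{x})$: $\vec{s}^*_\varsigma=\vec{W}\rho_\varsigma(\vec{s}^*_\varsigma)+\vec{b}+\vec{U}\rho_\varsigma(\varsigma(\vec{x}))$; conversely, $\vec{s}^*=\varsigma^{-1}(\vec{s}^*_\varsigma)$.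
   Context: A CHN (continuous Hopfield network) with element-wise non-linearity $\rho$ and parameters $\vec{W},\vec{b},\vec{U}$ assigns to an input $\vec{x}\in\mathbb{R}^d$ its equilibrium state(s), the solutions $\vec{s}^*\in\mathbb{R}^N$ of $\vec{s}^*=\rho'(\vec{s}^* )\odot(\vec{W}\rho(\vec{s}^* )+\vec{b}+\vec{U}\rho(\vec{x}))$, where $\odot$ is the Hadamard product. The CHN is called well-behaved if for every input $\vec{x}$ this equation has exactly one solution $\vec{s}^*$ and this solution is not identically zero. A HAM with non-linearity $\sigma$ has equilibrium equation $\vec{s}^*=\vec{W}\sigma(\vec{s}^* )+\vec{b}+\vec{U}\sigma(\vec{x})$. *)

theory Defs
  imports "HOL-Analysis.Analysis"
begin

definition vmap :: "(real \<Rightarrow> real) \<Rightarrow> real^'n \<Rightarrow> real^'n" where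
  "vmap f v = (\<chi> i. f (v $ i))"

definition hadamard :: "real^'n \<Rightarrow> real^'n \<Rightarrow> real^'n" where
  "hadamard u v = (\<chi> i. u $ i * v $ i)"

definition chn_equilibrium ::
  "(real \<Rightarrow> real) \<Rightarrow> real^'n^'n \<Rightarrow> real^'n \<Rightarrow> real^'d^'n \<Rightarrow> real^'d \<Rightarrow> real^'n \<Rightarrow> bool" where
  "chn_equilibrium \<rho> W b U x s \<longleftrightarrow>
     s = hadamard (vmap (deriv \<rho>) s) (W *v vmap \<rho> s + b + U *v vmap \<rho> x)"

definition chn_well_behaved ::
  "(real \<Rightarrow> real) \<Rightarrow> real^'n^'n \<Rightarrow> real^'n \<Rightarrow> real^'d^'n \<Rightarrow> bool" where
  "chn_well_behaved \<rho> W b U \<longleftrightarrow>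
     (\<forall>x::real^'d. (\<exists>!s. chn_equilibrium \<rho> W b U x s) \<and>
                    (\<forall>s. chn_equilibrium \<rho> W b U x s \<longrightarrow> s \<noteq> 0))"

definition ham_equilibrium ::
  "(real \<Rightarrow> real) \<Rightarrow> real^'n^'n \<Rightarrow> real^'n \<Rightarrow> real^'d^'n \<Rightarrow> real^'d \<Rightarrow> real^'n \<Rightarrow> bool" where
  "ham_equilibrium \<sigma> W b U x s \<longleftrightarrow> s = W *v vmap \<sigma> s + b + U *v vmap \<sigma> x"

end

theory Submission
  imports Defs
begin

text \<open>Since \<open>\<lambda>u. u / \<rho>' u\<close> maps its domain \<open>D\<close> onto \<open>\<real>\<close>, some \<open>u \<in> D\<close> is sent to \<open>0\<close>,
  which forces \<open>u = 0\<close>; hence \<open>\<rho>' 0 \<noteq> 0\<close>. A coordinate of a CHN equilibrium with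
  \<open>\<rho>' (s i) = 0\<close> would vanish by the equilibrium equation, so every coordinate lies in \<open>D\<close>.
  Dividing the equilibrium equation by \<open>\<rho>' s\<close> then gives the HAM equation, because
  \<open>\<rho> = (\<rho> \<circ> \<varsigma>\<^sup>-\<^sup>1) \<circ> \<varsigma>\<close> on \<open>D\<close>.\<close>

lemma vmap_vmap: "vmap f (vmap g v) = vmap (f \<circ> g) v"
  by (simp add: vmap_def)

lemma vmap_cong: "(\<And>i. f (v $ i) = g (v $ i)) \<Longrightarrow> vmap f v = vmap g v"
  by (simp add: vmap_def)

lemma vmap_inv_into_vmap:
  assumes "inj_on f D" and "\<forall>i. v $ i \<in> D"
  shows "vmap (inv_into D f) (vmap f v) = v"
  using assms by (simp add: vmap_vmap vmap_def inv_into_f_f vec_eq_iff)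

lemma nonzero_at_0_if_bij_scaling:
  fixes d :: "real \<Rightarrow> real"
  assumes "bij_betw (\<lambda>u. u / d u) {u. d u \<noteq> 0} UNIV"
  shows "d 0 \<noteq> 0"
proof -
  have "0 \<in> (\<lambda>u. u / d u) ` {u. d u \<noteq> 0}"
    using assms by (simp add: bij_betw_def)
  then obtain u where "d u \<noteq> 0" and "u / d u = 0"
    by auto
  then show ?thesis
    by simp
qed

lemma chn_equilibrium_nth:
  assumes "chn_equilibrium \<rho> W b U x s"
  shows "s $ i = deriv \<rho> (s $ i) * (W *v vmap \<rho> s + b + U *v vmap \<rho> x) $ i"
proof -
  have "s $ i = hadamard (vmap (deriv \<rho>) s) (W *v vmap \<rho> s + b + U *v vmap \<rho> x) $ i"
    using assms unfolding chn_equilibrium_def by (rule arg_cong)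
  then show ?thesis
    by (simp add: hadamard_def vmap_def)
qed

lemma chn_equilibrium_deriv_nonzero:
  assumes "deriv \<rho> 0 \<noteq> 0" and "chn_equilibrium \<rho> W b U x s"
  shows "deriv \<rho> (s $ i) \<noteq> 0"
proof
  assume "deriv \<rho> (s $ i) = 0"
  then have "s $ i = 0"
    using chn_equilibrium_nth[OF assms(2), of i] by simp
  with assms(1) \<open>deriv \<rho> (s $ i) = 0\<close> show False
    by simp
qed

lemma chn_equilibrium_imp_ham_equilibrium:
  assumes eq: "chn_equilibrium \<rho> W b U x s"
    and s_nonzero: "\<forall>i. deriv \<rho> (s $ i) \<noteq> 0"
    and x_nonzero: "\<forall>i. deriv \<rho> (x $ i) \<noteq> 0"
    and \<sigma>_scaled: "\<And>u. deriv \<rho> u \<noteq> 0 \<Longrightarrow> \<sigma> (u / deriv \<rho> u) = \<rho> u"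
  shows "ham_equilibrium \<sigma> W b U
           (vmap (\<lambda>u. u / deriv \<rho> u) x) (vmap (\<lambda>u. u / deriv \<rho> u) s)"
proof -
  have \<sigma>_s: "vmap \<sigma> (vmap (\<lambda>u. u / deriv \<rho> u) s) = vmap \<rho> s"
    using s_nonzero \<sigma>_scaled by (auto simp: vmap_vmap intro!: vmap_cong)
  have \<sigma>_x: "vmap \<sigma> (vmap (\<lambda>u. u / deriv \<rho> u) x) = vmap \<rho> x"
    using x_nonzero \<sigma>_scaled by (auto simp: vmap_vmap intro!: vmap_cong)
  have "vmap (\<lambda>u. u / deriv \<rho> u) s = W *v vmap \<rho> s + b + U *v vmap \<rho> x"
    unfolding vec_eq_iff
  proof
    fix i
    have "vmap (\<lambda>u. u / deriv \<rho> u) s $ i = s $ i / deriv \<rho> (s $ i)"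
      by (simp add: vmap_def)
    also have "\<dots> = (W *v vmap \<rho> s + b + U *v vmap \<rho> x) $ i"
      using chn_equilibrium_nth[OF eq, of i] s_nonzero
      by (metis nonzero_mult_div_cancel_left)
    finally show "vmap (\<lambda>u. u / deriv \<rho> u) s $ i = (W *v vmap \<rho> s + b + U *v vmap \<rho> x) $ i" .
  qed
  then show ?thesis
    unfolding ham_equilibrium_def \<sigma>_s \<sigma>_x .
qed

theorem theorem2:
  fixes \<rho> :: "real \<Rightarrow> real"
    and W :: "real^'n^'n" and b :: "real^'n" and U :: "real^'d^'n"
    and x :: "real^'d" and s :: "real^'n"
    and D :: "real set" and vs :: "real \<Rightarrow> real"
  assumes diff: "\<And>u. \<rho> differentiable (at u)"
    and D_eq: "D = {u. deriv \<rho> u \<noteq> 0}"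
    and vs_eq: "\<And>u. vs u = u / deriv \<rho> u"
    and bij: "bij_betw vs D UNIV"
    and wb: "chn_well_behaved \<rho> W b U"
    and xD: "\<forall>i. x $ i \<in> D"
    and eq: "chn_equilibrium \<rho> W b U x s"
  shows "(\<forall>i. s $ i \<in> D)
       \<and> ham_equilibrium (\<rho> \<circ> inv_into D vs) W b U (vmap vs x) (vmap vs s)
       \<and> s = vmap (inv_into D vs) (vmap vs s)"
proof -
  have vs_def: "vs = (\<lambda>u. u / deriv \<rho> u)"
    using vs_eq by blast
  have "deriv \<rho> 0 \<noteq> 0"
    using nonzero_at_0_if_bij_scaling bij unfolding D_eq vs_def .
  then have s_nonzero: "\<forall>i. deriv \<rho> (s $ i) \<noteq> 0"
    using chn_equilibrium_deriv_nonzero[OF _ eq] by blast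
  then have sD: "\<forall>i. s $ i \<in> D"
    by (simp add: D_eq)
  have x_nonzero: "\<forall>i. deriv \<rho> (x $ i) \<noteq> 0"
    using xD by (simp add: D_eq)
  have inj: "inj_on vs D"
    using bij by (simp add: bij_betw_def)
  have \<sigma>_scaled: "\<And>u. deriv \<rho> u \<noteq> 0 \<Longrightarrow> (\<rho> \<circ> inv_into D vs) (u / deriv \<rho> u) = \<rho> u"
    using inj by (simp add: D_eq inv_into_f_f flip: vs_eq)
  have "ham_equilibrium (\<rho> \<circ> inv_into D vs) W b U (vmap vs x) (vmap vs s)"
    unfolding vs_def[THEN arg_cong[where f = vmap]]
    by (rule chn_equilibrium_imp_ham_equilibrium[OF eq s_nonzero x_nonzero \<sigma>_scaled])
  moreover have "s = vmap (inv_into D vs) (vmap vs s)"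
    using vmap_inv_into_vmap[OF inj sD] by simp
  ultimately show ?thesis
    using sD by blast
qed

end
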